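(* Let $A$ be an alternative algebra over a field $F$ with unit element $1$, and let $d$ be a derivation with invertible values of $A$. If $x\in A$ satisfies $d(x)=0$, then either $x=0$ or $x$ is invertible.
   Context: An algebra $A$ is alternative if $(x,x,y)=0$ and $(x,y,y)=0$ for all $x,y\in A$, where $(x,y,z)=(xy)z-x(yz)$ is the associator. An element $a$ of a unital alternative algebra is invertible if there is $b$ with $ab=ba=1$; $U$ denotes the set of invertible elements of $A$. A derivation with invertible values of $A$ is a nonzero derivation $d$ of $A$ such that for every $x\in A$ either $d(x)\in U$ or $d(x)=0$. *)

theory Defs
  imports Main "HOL.Vector_Spaces"
begin

definition algebra_over :: "('k::field \<Rightarrow> 'a::ab_group_add \<Rightarrow> 'a) \<Rightarrow> ('a \<Rightarrow> 'a \<Rightarrow> 'a) \<Rightarrow> bool" where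
  "algebra_over sc mul \<longleftrightarrow>
     vector_space sc \<and>
     (\<forall>x y z. mul (x + y) z = mul x z + mul y z) \<and>
     (\<forall>x y z. mul x (y + z) = mul x y + mul x z) \<and>
     (\<forall>c x y. mul (sc c x) y = sc c (mul x y)) \<and>
     (\<forall>c x y. mul x (sc c y) = sc c (mul x y))"

definition associator :: "('a \<Rightarrow> 'a \<Rightarrow> 'a) \<Rightarrow> 'a::ab_group_add \<Rightarrow> 'a \<Rightarrow> 'a \<Rightarrow> 'a" where
  "associator mul x y z = mul (mul x y) z - mul x (mul y z)"

definition alternative_algebra :: "('k::field \<Rightarrow> 'a::ab_group_add \<Rightarrow> 'a) \<Rightarrow> ('a \<Rightarrow> 'a \<Rightarrow> 'a) \<Rightarrow> bool" where
  "alternative_algebra sc mul \<longleftrightarrow> algebra_over sc mul \<and>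
     (\<forall>x y. associator mul x x y = 0) \<and> (\<forall>x y. associator mul x y y = 0)"

definition is_unit_elem :: "('a \<Rightarrow> 'a \<Rightarrow> 'a) \<Rightarrow> 'a \<Rightarrow> bool" where
  "is_unit_elem mul e \<longleftrightarrow> (\<forall>x. mul e x = x \<and> mul x e = x)"

definition invertible_elem :: "('a \<Rightarrow> 'a \<Rightarrow> 'a) \<Rightarrow> 'a \<Rightarrow> 'a \<Rightarrow> bool" where
  "invertible_elem mul e a \<longleftrightarrow> (\<exists>b. mul a b = e \<and> mul b a = e)"

definition derivation :: "('k::field \<Rightarrow> 'a::ab_group_add \<Rightarrow> 'a) \<Rightarrow> ('a \<Rightarrow> 'a \<Rightarrow> 'a) \<Rightarrow> ('a \<Rightarrow> 'a) \<Rightarrow> bool" where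
  "derivation sc mul d \<longleftrightarrow>
     (\<forall>x y. d (x + y) = d x + d y) \<and> (\<forall>c x. d (sc c x) = sc c (d x)) \<and>
     (\<forall>x y. d (mul x y) = mul (d x) y + mul x (d y))"

definition derivation_inv_values :: "('k::field \<Rightarrow> 'a::ab_group_add \<Rightarrow> 'a) \<Rightarrow> ('a \<Rightarrow> 'a \<Rightarrow> 'a) \<Rightarrow> 'a \<Rightarrow> ('a \<Rightarrow> 'a) \<Rightarrow> bool" where
  "derivation_inv_values sc mul e d \<longleftrightarrow> derivation sc mul d \<and> (\<exists>x. d x \<noteq> 0) \<and>
     (\<forall>x. invertible_elem mul e (d x) \<or> d x = 0)"

end

theory Submission
  imports Defs
begin

(* Let u = d y be a nonzero, hence invertible, value of d.  If d x = 0,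
   the product rule gives d (y x) = u x and d (x (y x)) = x (u x), so both u x and
   x (u x) are zero or invertible.  The theorem is therefore a statement about unital
   alternative rings only:
     if u is invertible and u x, x (u x) are each zero or invertible, then x = 0 or
     x is invertible.
   To prove it we develop, in a locale of biadditive alternative multiplications,
   the skew-symmetry of the associator, flexibility and the left and middle Moufang
   identities (via the Teichmueller identity).  From these, an invertible element
   can be cancelled on the left (and, passing to the opposite ring, on the right).
   Cancellation disposes of the zero cases, and the Moufang identity
   (x (u x)) z = x (u (x z)) turns an inverse of x (u x) into an inverse of x. *)

locale alternative_ring =
  fixes mul :: "'a::ab_group_add \<Rightarrow> 'a \<Rightarrow> 'a"
  assumes add_left: "\<And>x y z. mul (x + y) z = mul x z + mul y z"
    and add_right: "\<And>x y z. mul x (y + z) = mul x y + mul x z"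
    and left_alternative: "\<And>x y. associator mul x x y = 0"
    and right_alternative: "\<And>x y. associator mul x y y = 0"
begin

abbreviation assoc :: "'a \<Rightarrow> 'a \<Rightarrow> 'a \<Rightarrow> 'a" where
  "assoc \<equiv> associator mul"

lemma zero_left [simp]: "mul 0 y = 0"
  using add_left[of 0 0 y] by simp

lemma zero_right [simp]: "mul y 0 = 0"
  using add_right[of y 0 0] by simp

lemma minus_left: "mul (- x) y = - mul x y"
proof -
  have "mul x y + mul (- x) y = 0" using add_left[of x "- x" y] by simp
  then show ?thesis by (rule minus_unique [symmetric])
qed

lemma minus_right: "mul y (- x) = - mul y x"
proof -
  have "mul y x + mul y (- x) = 0" using add_right[of y x "- x"] by simp
  then show ?thesis by (rule minus_unique [symmetric])
qed

lemma diff_left: "mul (x - z) y = mul x y - mul z y"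
  by (metis add_left minus_left diff_conv_add_uminus)

lemma diff_right: "mul y (x - z) = mul y x - mul y z"
  by (metis add_right minus_right diff_conv_add_uminus)

lemmas distrib = add_left add_right minus_left minus_right diff_left diff_right

lemma teichmueller:
  "assoc (mul a b) c d - assoc a (mul b c) d + assoc a b (mul c d)
     = mul a (assoc b c d) + mul (assoc a b c) d"
  by (simp add: associator_def distrib algebra_simps)

lemma assoc_skew_12: "assoc x y z = - assoc y x z"
proof -
  have "assoc (x + y) (x + y) z = 0" by (rule left_alternative)
  then have "assoc x x z + assoc x y z + assoc y x z + assoc y y z = 0"
    by (simp add: associator_def distrib algebra_simps)
  then show ?thesis
    using left_alternative[of x z] left_alternative[of y z] by (simp add: eq_neg_iff_add_eq_0)
qed

lemma assoc_skew_23: "assoc x y z = - assoc x z y"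
proof -
  have "assoc x (y + z) (y + z) = 0" by (rule right_alternative)
  then have "assoc x y y + assoc x y z + assoc x z y + assoc x z z = 0"
    by (simp add: associator_def distrib algebra_simps)
  then show ?thesis
    using right_alternative[of x y] right_alternative[of x z] by (simp add: eq_neg_iff_add_eq_0)
qed

lemma assoc_flexible: "assoc x y x = 0"
  using assoc_skew_23[of x y x] left_alternative[of x y] by simp

lemma flexible: "mul (mul a x) a = mul a (mul x a)"
  using assoc_flexible[of a x] by (simp add: associator_def)

lemma left_alternative_law: "mul a (mul a y) = mul (mul a a) y"
  using left_alternative[of a y] by (simp add: associator_def)

lemma assoc_mul_right_inner: "assoc a (mul x a) y = mul a (assoc a x y)"
proof -
  have t1: "assoc (mul x a) a y - assoc x (mul a a) y + assoc x a (mul a y) = 0"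
    using teichmueller[of x a a y] left_alternative[of a y] right_alternative[of x a] by simp
  have t2: "assoc (mul a a) y x - assoc a (mul a y) x = mul a (assoc a y x)"
    using teichmueller[of a a y x] left_alternative[of a y] left_alternative[of a "mul y x"]
    by simp
  have "assoc a (mul x a) y = assoc x a (mul a y) - assoc x (mul a a) y"
    using assoc_skew_12[of a "mul x a" y] t1 by (simp add: algebra_simps)
  also have "\<dots> = assoc a (mul a y) x + assoc (mul a a) x y"
    using assoc_skew_12[of x a "mul a y"] assoc_skew_23[of a x "mul a y"]
      assoc_skew_12[of x "mul a a" y] by simp
  also have "\<dots> = mul a (assoc a x y)"
    using t2 assoc_skew_23[of "mul a a" y x] assoc_skew_23[of a y x]
    by (simp add: algebra_simps minus_right)
  finally show ?thesis .
qed

lemma moufang_left: "mul (mul (mul a x) a) y = mul a (mul x (mul a y))"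
proof -
  have expand: "mul (mul (mul a x) a) y - mul a (mul x (mul a y))
      = assoc (mul a x) a y + assoc a x (mul a y)"
    by (simp add: associator_def distrib algebra_simps)
  have "assoc (mul a x) a y - assoc a (mul x a) y + assoc a x (mul a y) = mul a (assoc x a y)"
    using teichmueller[of a x a y] assoc_flexible[of a x] by simp
  then have "assoc (mul a x) a y + assoc a x (mul a y)
      = mul a (assoc a x y) + mul a (assoc x a y)"
    using assoc_mul_right_inner[of a x y] by (simp add: algebra_simps)
  also have "\<dots> = 0"
    using assoc_skew_12[of x a y] by (simp add: minus_right)
  finally show ?thesis using expand by simp
qed

lemma moufang_middle: "mul (mul a x) (mul y a) = mul (mul a (mul x y)) a"
proof -
  have expand: "mul (mul a x) (mul y a) - mul (mul a (mul x y)) a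
      = mul (assoc a x y) a - assoc (mul a x) y a"
    by (simp add: associator_def distrib algebra_simps)
  have "assoc (mul a x) y a = mul (assoc a x y) a"
    using teichmueller[of a x y a] assoc_mul_right_inner[of a y x]
      assoc_skew_23[of a x "mul y a"] assoc_skew_23[of a y x] assoc_skew_12[of a x y]
      assoc_skew_23[of x y a] assoc_flexible[of a "mul x y"]
    by (simp add: minus_right)
  then show ?thesis using expand by simp
qed

text \<open>Left cancellation of an invertible element: if u v = v u = e, then
  v (u y) = y.  (Alternative rings are not associative, so this needs Moufang.)\<close>

lemma inverse_cancel_left:
  assumes unit: "is_unit_elem mul e"
    and uv: "mul u v = e" and vu: "mul v u = e"
  shows "mul v (mul u y) = y"
proof -
  have e: "\<And>z. mul e z = z" "\<And>z. mul z e = z"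
    using unit by (simp_all add: is_unit_elem_def)
  have "mul (mul u (mul v v)) u = e"
    using moufang_middle[of u v v] uv vu e by simp
  then have u_vvu: "\<And>y. mul u (mul v (mul v (mul u y))) = y"
    using moufang_left[of u "mul v v"] e left_alternative_law[of v] by metis
  have u_vu: "\<And>y. mul u (mul v (mul u y)) = mul u y"
    using moufang_left[of u v] uv e by metis
  have "mul v (mul u y) = mul u (mul v (mul v (mul u (mul v (mul u y)))))"
    using u_vvu by metis
  also have "\<dots> = mul u (mul v (mul v (mul u y)))"
    using u_vu[of y] by simp
  also have "\<dots> = y"
    using u_vvu by metis
  finally show ?thesis .
qed

end

lemma alternative_ring_opposite:
  assumes "alternative_ring mul"
  shows "alternative_ring (\<lambda>a b. mul b a)"
proof -
  interpret alternative_ring mul by (fact assms)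
  show ?thesis
  proof
    fix x y z :: 'a
    show "mul z (x + y) = mul z x + mul z y" by (rule add_right)
    show "mul (y + z) x = mul y x + mul z x" by (rule add_left)
    show "associator (\<lambda>a b. mul b a) x x y = 0"
      using right_alternative[of y x] by (simp add: associator_def)
    show "associator (\<lambda>a b. mul b a) x y y = 0"
      using left_alternative[of y x] by (simp add: associator_def)
  qed
qed

context alternative_ring
begin

lemma inverse_cancel_right:
  assumes unit: "is_unit_elem mul e"
    and uv: "mul u v = e" and vu: "mul v u = e"
  shows "mul (mul y u) v = y"
proof -
  interpret opposite: alternative_ring "\<lambda>a b. mul b a"
    using alternative_ring_opposite[OF alternative_ring_axioms] .
  have "is_unit_elem (\<lambda>a b. mul b a) e"
    using unit by (simp add: is_unit_elem_def)
  from opposite.inverse_cancel_left[OF this vu uv] show ?thesis by simp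
qed

text \<open>A factor of an invertible product x (u x), with u invertible, is invertible:
  by Moufang, left multiplication by x (u x) is the composite L_x L_u L_x, which
  yields both a right inverse of x and injectivity of L_x.\<close>

lemma invertible_if_sandwich_invertible:
  assumes unit: "is_unit_elem mul e"
    and u: "invertible_elem mul e u"
    and sandwich: "invertible_elem mul e (mul x (mul u x))"
  shows "invertible_elem mul e x"
proof -
  have e: "\<And>z. mul e z = z" "\<And>z. mul z e = z"
    using unit by (simp_all add: is_unit_elem_def)
  define p where "p = mul x (mul u x)"
  obtain q where pq: "mul p q = e" and qp: "mul q p = e"
    using sandwich unfolding p_def invertible_elem_def by blast
  have p_mul: "\<And>z. mul p z = mul x (mul u (mul x z))"
    using moufang_left[of x u] flexible[of x u] by (simp add: p_def)
  have inj: "a = b" if "mul x a = mul x b" for a b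
  proof -
    have "a = mul q (mul p a)" using inverse_cancel_left[OF unit pq qp] by simp
    also have "\<dots> = mul q (mul p b)" using p_mul that by simp
    also have "\<dots> = b" using inverse_cancel_left[OF unit pq qp] by simp
    finally show "a = b" .
  qed
  define z where "z = mul u (mul x q)"
  have xz: "mul x z = e"
    using p_mul[of q] pq by (simp add: z_def)
  have "mul x y = mul x (mul z (mul x y))" for y
    using moufang_left[of x z] xz e by metis
  then have "y = mul z (mul x y)" for y
    using inj by metis
  then have "mul z x = e"
    using e by metis
  with xz show ?thesis
    unfolding invertible_elem_def by blast
qed

lemma zero_or_invertible:
  assumes unit: "is_unit_elem mul e"
    and u: "invertible_elem mul e u"
    and ux: "mul u x = 0 \<or> invertible_elem mul e (mul u x)"
    and xux: "mul x (mul u x) = 0 \<or> invertible_elem mul e (mul x (mul u x))"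
  shows "x = 0 \<or> invertible_elem mul e x"
proof -
  obtain v where uv: "mul u v = e" and vu: "mul v u = e"
    using u unfolding invertible_elem_def by blast
  consider "mul u x = 0" | "invertible_elem mul e (mul u x)" "mul x (mul u x) = 0"
    | "invertible_elem mul e (mul x (mul u x))"
    using ux xux by blast
  then show ?thesis
  proof cases
    case 1
    then show ?thesis
      using inverse_cancel_left[OF unit uv vu, of x] by simp
  next
    case 2
    then obtain s where "mul (mul u x) s = e" "mul s (mul u x) = e"
      unfolding invertible_elem_def by blast
    then show ?thesis
      using inverse_cancel_right[of e "mul u x" s x] unit 2(2) by simp
  next
    case 3
    then show ?thesis
      using invertible_if_sandwich_invertible[OF unit u] by blast
  qed
qed

end

lemma alternative_ring_of_alternative_algebra:
  assumes "alternative_algebra sc mul"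
  shows "alternative_ring mul"
  using assms unfolding alternative_algebra_def algebra_over_def
  by (simp add: alternative_ring_def)

theorem lemma1p2:
  fixes sc :: "'k::field \<Rightarrow> 'a::ab_group_add \<Rightarrow> 'a"
    and mul :: "'a \<Rightarrow> 'a \<Rightarrow> 'a" and e :: 'a and d :: "'a \<Rightarrow> 'a" and x :: 'a
  assumes "alternative_algebra sc mul"
    and "is_unit_elem mul e"
    and "derivation_inv_values sc mul e d"
    and "d x = 0"
  shows "x = 0 \<or> invertible_elem mul e x"
proof -
  interpret alternative_ring mul
    using assms(1) by (rule alternative_ring_of_alternative_algebra)
  have leibniz: "\<And>a b. d (mul a b) = mul (d a) b + mul a (d b)"
    and value_dichotomy: "\<And>z. invertible_elem mul e (d z) \<or> d z = 0"
    using assms(3) unfolding derivation_inv_values_def derivation_def by blast+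
  obtain y where "d y \<noteq> 0"
    using assms(3) unfolding derivation_inv_values_def by blast
  then have u: "invertible_elem mul e (d y)"
    using value_dichotomy by blast
  have d_yx: "d (mul y x) = mul (d y) x"
    using leibniz[of y x] assms(4) by simp
  have d_xyx: "d (mul x (mul y x)) = mul x (mul (d y) x)"
    using leibniz[of x "mul y x"] assms(4) d_yx by simp
  show ?thesis
    using zero_or_invertible[OF assms(2) u]
      value_dichotomy[of "mul y x"] value_dichotomy[of "mul x (mul y x)"] d_yx d_xyx by metis
qed

end
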